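(* If $n$ is a non-negative integer, then $$\sum_{k = 1}^n \sum_{j = 0}^{k - 1} \frac{2^{2j}}{k - j} \binom{2(n - j)}{n - j} = 2^{2n + 1} + \left(H_n - 2\right)(2n + 1)\binom{2n}{n}$$ and $$\sum_{k = 1}^n \sum_{j = 0}^{k - 1} \frac{2^{2j}}{2k - 2j - 1} \binom{2(n - j)}{n - j} = \left(O_{n + 1} - 1 \right)(2n + 1)\binom{2n}{n}.$$
   Context: $H_n=\sum_{m=1}^n\frac1m$ and $O_n=\sum_{m=1}^n\frac1{2m-1}$. Empty sums are zero. *)

theory Defs
  imports Complex_Main
begin

definition H :: "nat \<Rightarrow> real" where
  "H n = (\<Sum>m=1..n. 1 / real m)"

definition Odd_harm :: "nat \<Rightarrow> real" where
  "Odd_harm n = (\<Sum>m=1..n. 1 / (2 * real m - 1))"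

end

theory Submission
  imports Defs
begin

text \<open>Exchanging the order of summation turns each double sum into a convolution
  \<open>S n = (\<Sum>j<n. 4^j * b (n - j))\<close> with \<open>b m\<close> equal to \<open>H m\<close> (resp. \<open>O m\<close>) times the
  central binomial coefficient \<open>binom(2m, m)\<close>. Such a sum is determined by \<open>S 0 = 0\<close> and
  \<open>S (n + 1) = b (n + 1) + 4 * S n\<close>, and the two closed forms satisfy this recurrence because
  \<open>(n + 1) binom(2n + 2, n + 1) = 2 (2n + 1) binom(2n, n)\<close>.\<close>

lemma sum_triangle_convolution:
  fixes a w c :: "nat \<Rightarrow> 'a::comm_semiring_1"
  shows "(\<Sum>k=1..n. \<Sum>j=0..k-1. a j * w (k - j) * c (n - j))
       = (\<Sum>j<n. a j * ((\<Sum>m=1..n-j. w m) * c (n - j)))"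
proof -
  have "(\<Sum>k=1..n. \<Sum>j=0..k-1. a j * w (k - j) * c (n - j))
      = (\<Sum>k=1..n. \<Sum>j=0..<k. a j * w (k - j) * c (n - j))"
    by (intro sum.cong refl) (auto simp: atLeastLessThanSuc_atLeastAtMost[symmetric])
  also have "\<dots> = (\<Sum>k=0..n. \<Sum>j=0..<k. a j * w (k - j) * c (n - j))"
    by (simp add: sum.atLeast_Suc_atMost)
  also have "\<dots> = (\<Sum>j=0..<n. \<Sum>k=Suc j..n. a j * w (k - j) * c (n - j))"
    by (rule sum.nested_swap)
  also have "\<dots> = (\<Sum>j<n. a j * ((\<Sum>m=1..n-j. w m) * c (n - j)))"
  proof (rule sum.cong)
    fix j assume "j \<in> {..<n}"
    then have shift: "(\<Sum>m=1..n-j. w m) = (\<Sum>k=Suc j..n. w (k - j))"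
      using sum.shift_bounds_cl_nat_ivl[of "\<lambda>k. w (k - j)" 1 j "n - j"] by simp
    show "(\<Sum>k=Suc j..n. a j * w (k - j) * c (n - j)) = a j * ((\<Sum>m=1..n-j. w m) * c (n - j))"
      unfolding shift by (simp add: sum_distrib_left sum_distrib_right mult.assoc)
  qed (simp add: atLeast0LessThan)
  finally show ?thesis .
qed

lemma sum_power_convolution_eq_recurrence:
  fixes q :: "'a::comm_semiring_1"
  assumes "F 0 = 0" and "\<And>n. F (Suc n) = b (Suc n) + q * F n"
  shows "(\<Sum>j<n. q ^ j * b (n - j)) = F n"
proof (induction n)
  case (Suc n)
  have "(\<Sum>j<Suc n. q ^ j * b (Suc n - j)) = b (Suc n) + q * (\<Sum>j<n. q ^ j * b (n - j))"
    unfolding sum.lessThan_Suc_shift by (simp add: sum_distrib_left mult.assoc)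
  then show ?case
    using Suc.IH assms(2) by simp
qed (simp add: assms(1))

lemma Suc_times_central_binomial:
  "Suc n * ((2 * Suc n) choose Suc n) = 2 * (2 * n + 1) * ((2 * n) choose n)"
proof -
  have "Suc n * ((2 * Suc n) choose Suc n) = Suc (Suc (2 * n)) * (Suc (2 * n) choose n)"
    using Suc_times_binomial[of n "Suc (2 * n)"] by simp
  also have "Suc (2 * n) choose n = Suc (2 * n) choose Suc n"
    by (subst binomial_symmetric) auto
  also have "Suc (Suc (2 * n)) * (Suc (2 * n) choose Suc n) = 2 * (Suc n * (Suc (2 * n) choose Suc n))"
    by simp
  also have "Suc n * (Suc (2 * n) choose Suc n) = Suc (2 * n) * ((2 * n) choose n)"
    by (rule Suc_times_binomial)
  finally show ?thesis by simp
qed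

lemma of_nat_central_binomial_Suc:
  "4 * (2 * real n + 1) * real ((2 * n) choose n) = 2 * (real n + 1) * real ((2 * Suc n) choose Suc n)"
proof -
  have "(real n + 1) * real ((2 * Suc n) choose Suc n) = 2 * (2 * real n + 1) * real ((2 * n) choose n)"
    using arg_cong[OF Suc_times_central_binomial[of n], of real]
    by (simp only: of_nat_mult of_nat_Suc of_nat_add of_nat_numeral of_nat_1) (simp add: algebra_simps)
  then show ?thesis
    by algebra
qed

lemma H_Suc: "H (Suc n) = H n + 1 / real (Suc n)"
  by (simp add: H_def)

lemma Odd_harm_Suc: "Odd_harm (Suc n) = Odd_harm n + 1 / (2 * real n + 1)"
  by (simp add: Odd_harm_def)

lemma sum_power4_H_central_binomial:
  "(\<Sum>j<n. 4 ^ j * (H (n - j) * real ((2 * (n - j)) choose (n - j))))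
     = 2 ^ (2 * n + 1) + (H n - 2) * (2 * real n + 1) * real ((2 * n) choose n)"
proof (rule sum_power_convolution_eq_recurrence
    [where F = "\<lambda>n. 2 ^ (2 * n + 1) + (H n - 2) * (2 * real n + 1) * real ((2 * n) choose n)"])
  fix n
  let ?C = "real ((2 * n) choose n)" and ?C' = "real ((2 * Suc n) choose Suc n)"
  have "H (Suc n) * ?C' + 4 * (2 ^ (2 * n + 1) + (H n - 2) * (2 * real n + 1) * ?C)
      = H (Suc n) * ?C' + 2 ^ (2 * Suc n + 1) + (H n - 2) * (4 * (2 * real n + 1) * ?C)"
    by (simp add: algebra_simps)
  also have "\<dots> = H (Suc n) * ?C' + 2 ^ (2 * Suc n + 1) + (H n - 2) * (2 * (real n + 1) * ?C')"
    by (simp only: of_nat_central_binomial_Suc)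
  also have "\<dots> = 2 ^ (2 * Suc n + 1) + (H (Suc n) - 2) * (2 * real (Suc n) + 1) * ?C'"
    unfolding H_Suc by (simp add: field_simps)
  finally show "2 ^ (2 * Suc n + 1) + (H (Suc n) - 2) * (2 * real (Suc n) + 1) * ?C'
      = H (Suc n) * ?C' + 4 * (2 ^ (2 * n + 1) + (H n - 2) * (2 * real n + 1) * ?C)" ..
qed (simp add: H_def)

lemma sum_power4_Odd_harm_central_binomial:
  "(\<Sum>j<n. 4 ^ j * (Odd_harm (n - j) * real ((2 * (n - j)) choose (n - j))))
     = (Odd_harm (n + 1) - 1) * (2 * real n + 1) * real ((2 * n) choose n)"
proof (rule sum_power_convolution_eq_recurrence
    [where F = "\<lambda>n. (Odd_harm (n + 1) - 1) * (2 * real n + 1) * real ((2 * n) choose n)"])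
  fix n
  let ?C = "real ((2 * n) choose n)" and ?C' = "real ((2 * Suc n) choose Suc n)"
  have "Odd_harm (Suc n) * ?C' + 4 * ((Odd_harm (n + 1) - 1) * (2 * real n + 1) * ?C)
      = Odd_harm (Suc n) * ?C' + (Odd_harm (Suc n) - 1) * (4 * (2 * real n + 1) * ?C)"
    by (simp add: algebra_simps)
  also have "\<dots> = Odd_harm (Suc n) * ?C' + (Odd_harm (Suc n) - 1) * (2 * (real n + 1) * ?C')"
    by (simp only: of_nat_central_binomial_Suc)
  also have "\<dots> = (Odd_harm (Suc n + 1) - 1) * (2 * real (Suc n) + 1) * ?C'"
    unfolding Suc_eq_plus1[symmetric] Odd_harm_Suc[of "Suc n"] by (simp add: field_simps)
  finally show "(Odd_harm (Suc n + 1) - 1) * (2 * real (Suc n) + 1) * ?C'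
      = Odd_harm (Suc n) * ?C' + 4 * ((Odd_harm (n + 1) - 1) * (2 * real n + 1) * ?C)" ..
qed (simp add: Odd_harm_def)

theorem proposition19:
  fixes n :: nat
  shows "((\<Sum>k=1..n. \<Sum>j=0..k-1. 2 ^ (2*j) / real (k - j) * real ((2*(n-j)) choose (n-j)))
           = 2 ^ (2*n+1) + (H n - 2) * (2 * real n + 1) * real ((2*n) choose n)) \<and>
         ((\<Sum>k=1..n. \<Sum>j=0..k-1. 2 ^ (2*j) / (2 * real k - 2 * real j - 1) * real ((2*(n-j)) choose (n-j)))
           = (Odd_harm (n+1) - 1) * (2 * real n + 1) * real ((2*n) choose n))"
proof
  let ?C = "\<lambda>m. real ((2 * m) choose m)"
  have "(\<Sum>k=1..n. \<Sum>j=0..k-1. 2 ^ (2*j) / real (k - j) * ?C (n - j))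
      = (\<Sum>k=1..n. \<Sum>j=0..k-1. 4 ^ j * (1 / real (k - j)) * ?C (n - j))"
    by (simp add: power_mult)
  also have "\<dots> = (\<Sum>j<n. 4 ^ j * (H (n - j) * ?C (n - j)))"
    unfolding H_def by (rule sum_triangle_convolution)
  finally show "(\<Sum>k=1..n. \<Sum>j=0..k-1. 2 ^ (2*j) / real (k - j) * ?C (n - j))
      = 2 ^ (2*n+1) + (H n - 2) * (2 * real n + 1) * ?C n"
    unfolding sum_power4_H_central_binomial .
next
  let ?C = "\<lambda>m. real ((2 * m) choose m)"
  have "(\<Sum>k=1..n. \<Sum>j=0..k-1. 2 ^ (2*j) / (2 * real k - 2 * real j - 1) * ?C (n - j))
      = (\<Sum>k=1..n. \<Sum>j=0..k-1. 4 ^ j * (1 / (2 * real (k - j) - 1)) * ?C (n - j))"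
    by (intro sum.cong refl) (auto simp: of_nat_diff power_mult)
  also have "\<dots> = (\<Sum>j<n. 4 ^ j * (Odd_harm (n - j) * ?C (n - j)))"
    unfolding Odd_harm_def by (rule sum_triangle_convolution)
  finally show "(\<Sum>k=1..n. \<Sum>j=0..k-1. 2 ^ (2*j) / (2 * real k - 2 * real j - 1) * ?C (n - j))
      = (Odd_harm (n+1) - 1) * (2 * real n + 1) * ?C n"
    unfolding sum_power4_Odd_harm_central_binomial .
qed

end
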